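(* Let $R$ be a commutative ring and let $k\geq 1$. Let $x=(x^1,\dots,x^{k+1})$ and $y=(y^1,\dots,y^{k+1})$ be good configurations in $(R^2)^{k+1}$ such that $x^i\cdot x^{j\perp}=y^i\cdot y^{j\perp}$ for every pair of indices $i,j$. Then there exists a unique $g\in\mathrm{SL}_2(R)$ such that $y^i=gx^i$ for each $i$.
   Context: For $x=(x_1,x_2),y=(y_1,y_2)\in R^2$, write $y^\perp=(y_2,-y_1)$, so $x\cdot y^\perp=x_1y_2-x_2y_1$. A configuration $x=(x^1,\dots,x^{k+1})\in(R^2)^{k+1}$ is called good if there exist two indices $i,j$ such that $x^i\cdot x^{j\perp}$ is a unit of $R$, and bad otherwise. $\mathrm{SL}_2(R)$ acts on $R^2$ by matrix multiplication on column vectors. *)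

theory Defs
  imports Main
begin

text \<open>Vectors in R^2 are pairs; x \<cdot> y^perp = x1*y2 - x2*y1.\<close>
definition perp_dot :: "'a::comm_ring_1 \<times> 'a \<Rightarrow> 'a \<times> 'a \<Rightarrow> 'a" where
  "perp_dot x y = fst x * snd y - snd x * fst y"

text \<open>2x2 matrices ((a,b),(c,d)) = rows; action on column vectors.\<close>
type_synonym 'a mat2 = "('a \<times> 'a) \<times> ('a \<times> 'a)"

definition det2 :: "'a::comm_ring_1 mat2 \<Rightarrow> 'a" where
  "det2 g = fst (fst g) * snd (snd g) - snd (fst g) * fst (snd g)"

definition SL2 :: "'a::comm_ring_1 mat2 set" where
  "SL2 = {g. det2 g = 1}"

definition mat2_act :: "'a::comm_ring_1 mat2 \<Rightarrow> 'a \<times> 'a \<Rightarrow> 'a \<times> 'a" where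
  "mat2_act g v = (fst (fst g) * fst v + snd (fst g) * snd v,
                   fst (snd g) * fst v + snd (snd g) * snd v)"

text \<open>A configuration (x^1,...,x^{k+1}) is a function on indices {0..k}.
  Good: some pair i,j with x^i \<cdot> x^{j perp} a unit.\<close>
definition good :: "nat \<Rightarrow> (nat \<Rightarrow> 'a::comm_ring_1 \<times> 'a) \<Rightarrow> bool" where
  "good k x \<longleftrightarrow> (\<exists>i\<in>{0..k}. \<exists>j\<in>{0..k}. perp_dot (x i) (x j) dvd 1)"

end

theory Submission
  imports Defs
begin

text \<open>Since \<open>perp_dot\<close> is the determinant of the matrix with columns \<open>p, q\<close>, a pair
  with unit bracket is a basis of \<open>R\<^sup>2\<close>, and Cramer's rule
  \<open>[p,q] v = [v,q] p + [p,v] q\<close> expresses every vector in it. Hence a matrix is determined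
  by the images of \<open>p\<close> and \<open>q\<close>, and every other \<open>x\<^sup>l\<close> is determined by its brackets with
  \<open>x\<^sup>i\<close> and \<open>x\<^sup>j\<close>. Conversely, the matrix sending \<open>p, q\<close> to \<open>p', q'\<close> exists, and since
  \<open>[g p, g q] = det g [p,q]\<close> it lies in \<open>SL\<^sub>2\<close> exactly when \<open>[p',q'] = [p,q]\<close>.\<close>

lemma unit_mult_cancel_left:
  fixes a b c :: "'a::comm_ring_1"
  assumes "a dvd 1" and "a * b = a * c"
  shows "b = c"
proof -
  from \<open>a dvd 1\<close> obtain w where "1 = a * w" by (rule dvdE)
  then have "b = w * (a * b)" and "c = w * (a * c)"
    by (metis mult.assoc mult.commute mult_1_left)+
  with \<open>a * b = a * c\<close> show ?thesis by simp
qed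

lemma perp_dot_cramer:
  fixes p q v :: "'a::comm_ring_1 \<times> 'a"
  shows "perp_dot p q * fst v = fst p * perp_dot v q + fst q * perp_dot p v"
    and "perp_dot p q * snd v = snd p * perp_dot v q + snd q * perp_dot p v"
  by (simp_all add: perp_dot_def algebra_simps)

lemma mat2_act_cramer:
  fixes g :: "'a::comm_ring_1 mat2"
  shows "perp_dot p q * fst (mat2_act g v)
           = fst (mat2_act g p) * perp_dot v q + fst (mat2_act g q) * perp_dot p v"
    and "perp_dot p q * snd (mat2_act g v)
           = snd (mat2_act g p) * perp_dot v q + snd (mat2_act g q) * perp_dot p v"
  by (simp_all add: mat2_act_def perp_dot_def algebra_simps)

lemma perp_dot_mat2_act:
  fixes g :: "'a::comm_ring_1 mat2"
  shows "perp_dot (mat2_act g p) (mat2_act g q) = det2 g * perp_dot p q"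
  by (simp add: mat2_act_def perp_dot_def det2_def algebra_simps)

lemma mat2_eqI:
  fixes g h :: "'a::comm_ring_1 mat2"
  assumes "\<And>v. mat2_act g v = mat2_act h v"
  shows "g = h"
  using assms[of "(1, 0)"] assms[of "(0, 1)"]
  by (cases g, cases h) (simp add: mat2_act_def prod_eq_iff)

lemma mat2_eq_on_unimodular_pair:
  fixes g h :: "'a::comm_ring_1 mat2"
  assumes unit: "perp_dot p q dvd 1"
    and "mat2_act g p = mat2_act h p" and "mat2_act g q = mat2_act h q"
  shows "g = h"
proof (rule mat2_eqI)
  fix v
  have "perp_dot p q * fst (mat2_act g v) = perp_dot p q * fst (mat2_act h v)"
    and "perp_dot p q * snd (mat2_act g v) = perp_dot p q * snd (mat2_act h v)"
    using assms(2,3) by (simp_all only: mat2_act_cramer)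
  with unit show "mat2_act g v = mat2_act h v"
    by (simp add: prod_eq_iff unit_mult_cancel_left[OF unit])
qed

text \<open>The matrix \<open>w (P' adj P)\<close>, where \<open>P, P'\<close> have columns \<open>p, q\<close> and \<open>p', q'\<close>;
  for \<open>w\<close> the inverse of \<open>[p,q]\<close> it sends \<open>p, q\<close> to \<open>p', q'\<close>.\<close>
definition mat2_transfer :: "'a::comm_ring_1 \<Rightarrow> 'a \<times> 'a \<Rightarrow> 'a \<times> 'a \<Rightarrow> 'a \<times> 'a \<Rightarrow> 'a \<times> 'a \<Rightarrow> 'a mat2"
  where "mat2_transfer w p q p' q' =
    ((w * (fst p' * snd q - fst q' * snd p), w * (fst q' * fst p - fst p' * fst q)),
     (w * (snd p' * snd q - snd q' * snd p), w * (snd q' * fst p - snd p' * fst q)))"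

lemma mat2_act_transfer:
  "mat2_act (mat2_transfer w p q p' q') v =
     (w * (fst p' * perp_dot v q + fst q' * perp_dot p v),
      w * (snd p' * perp_dot v q + snd q' * perp_dot p v))"
  by (simp add: mat2_transfer_def mat2_act_def perp_dot_def algebra_simps)

lemma mat2_transfer_maps_pair:
  fixes p q p' q' :: "'a::comm_ring_1 \<times> 'a"
  assumes "w * perp_dot p q = 1"
  shows "mat2_act (mat2_transfer w p q p' q') p = p'"
    and "mat2_act (mat2_transfer w p q p' q') q = q'"
proof -
  have "perp_dot p p = 0" "perp_dot q q = 0"
    by (simp_all add: perp_dot_def)
  moreover have "w * (z * perp_dot p q) = z" for z
    using assms by (metis mult.assoc mult.commute mult_1_right)
  ultimately show "mat2_act (mat2_transfer w p q p' q') p = p'"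
    and "mat2_act (mat2_transfer w p q p' q') q = q'"
    by (simp_all add: mat2_act_transfer prod_eq_iff)
qed

lemma SL2_transfer_exists:
  fixes p q p' q' :: "'a::comm_ring_1 \<times> 'a"
  assumes unit: "perp_dot p q dvd 1" and bracket: "perp_dot p' q' = perp_dot p q"
  shows "\<exists>g\<in>SL2. mat2_act g p = p' \<and> mat2_act g q = q'"
proof -
  from unit obtain w where "w * perp_dot p q = 1"
    by (metis dvdE mult.commute)
  define g where "g = mat2_transfer w p q p' q'"
  have maps: "mat2_act g p = p'" "mat2_act g q = q'"
    unfolding g_def using mat2_transfer_maps_pair[OF \<open>w * perp_dot p q = 1\<close>] by auto
  have "perp_dot p q * det2 g = perp_dot p q * 1"
    using perp_dot_mat2_act[of g p q] maps bracket by (simp add: mult.commute)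
  then have "det2 g = 1" by (rule unit_mult_cancel_left[OF unit])
  with maps show ?thesis unfolding SL2_def by blast
qed

lemma mat2_act_determined_by_brackets:
  fixes g :: "'a::comm_ring_1 mat2"
  assumes unit: "perp_dot p q dvd 1"
    and maps: "mat2_act g p = p'" "mat2_act g q = q'"
    and brackets: "perp_dot p' q' = perp_dot p q"
      "perp_dot v q = perp_dot v' q'" "perp_dot p v = perp_dot p' v'"
  shows "mat2_act g v = v'"
proof -
  have "perp_dot p q * fst (mat2_act g v) = fst p' * perp_dot v q + fst q' * perp_dot p v"
    using mat2_act_cramer(1)[of p q g v] maps by simp
  also have "\<dots> = perp_dot p q * fst v'"
    using perp_dot_cramer(1)[of p' q' v'] brackets by simp
  finally have fst_eq: "perp_dot p q * fst (mat2_act g v) = perp_dot p q * fst v'" .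
  have "perp_dot p q * snd (mat2_act g v) = snd p' * perp_dot v q + snd q' * perp_dot p v"
    using mat2_act_cramer(2)[of p q g v] maps by simp
  also have "\<dots> = perp_dot p q * snd v'"
    using perp_dot_cramer(2)[of p' q' v'] brackets by simp
  finally show ?thesis
    using fst_eq by (simp add: prod_eq_iff unit_mult_cancel_left[OF unit])
qed

theorem lemma2p4:
  fixes x y :: "nat \<Rightarrow> 'a::comm_ring_1 \<times> 'a" and k :: nat
  assumes "k \<ge> 1"
    and "good k x" and "good k y"
    and "\<forall>i\<in>{0..k}. \<forall>j\<in>{0..k}. perp_dot (x i) (x j) = perp_dot (y i) (y j)"
  shows "\<exists>!g. g \<in> SL2 \<and> (\<forall>i\<in>{0..k}. y i = mat2_act g (x i))"
proof -
  note brackets = assms(4)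
  obtain i j where ij: "i \<in> {0..k}" "j \<in> {0..k}" and unit: "perp_dot (x i) (x j) dvd 1"
    using \<open>good k x\<close> unfolding good_def by blast
  obtain g where "g \<in> SL2" and maps: "mat2_act g (x i) = y i" "mat2_act g (x j) = y j"
    using SL2_transfer_exists[OF unit, of "y i" "y j"] brackets ij by auto
  have "y l = mat2_act g (x l)" if "l \<in> {0..k}" for l
    using mat2_act_determined_by_brackets[OF unit maps] brackets ij that by simp
  moreover have "h = g" if "h \<in> SL2 \<and> (\<forall>l\<in>{0..k}. y l = mat2_act h (x l))" for h
    using mat2_eq_on_unimodular_pair[OF unit, of h g] maps that ij by simp
  ultimately show ?thesis
    using \<open>g \<in> SL2\<close> by blast
qed

end
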